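(* Consider the one-dimensional scalar conservation law $u_t+f(u)_x=0$ on $\Omega=[a,b]$ with periodic (or compactly supported) boundary conditions, and let $u_h(\cdot,t)\in V_h^k$ be the solution of the semi-discrete NOES-DG scheme described in the context. If for every cell $K_i$ the quantities satisfy $$\max\left\{\frac{F_i}{E_i},0\right\}<C\,\sigma_i^{jump},$$ then the scheme is entropy stable in the sense that $$\int_\Omega \partial_t u_h\, v_h\,\mathrm dx\le 0 .$$
   Context: Mesh: $a=x_{1/2}<x_{3/2}<\dots<x_{N+1/2}=b$, uniform, cells $K_i=[x_{i-1/2},x_{i+1/2}]$, $h=x_{i+1/2}-x_{i-1/2}$, midpoint $x_i$. For $k\ge 1$, $V_h^k=\{w: w|_{K_i}\in P^k(K_i)\ \forall i\}$. For $w\in V_h^k$, $w^{-}_{i+1/2}$ and $w^{+}_{i+1/2}$ denote the traces of $w$ at $x_{i+1/2}$ from $K_i$ and $K_{i+1}$, $[\![w]\!]_{i+1/2}=w^+_{i+1/2}-w^-_{i+1/2}$; with periodic boundary conditions cell indices are taken modulo $N$ (with compactly supported data the boundary flux contributions vanish). Entropy pair $(U,F)$: $U$ convex, $F'(u)=U'(u)f'(u)$; entropy variable $v(u)=U'(u)$ and $A(u)=U''(u)^{-1}\ge 0$. Numerical flux: local Lax–Friedrichs $\hat f(u^-,u^+)=\tfrac12[f(u^+)+f(u^-)]-\tfrac12\alpha(u^+-u^-)$, $\alpha=\max_{u \text{ between } u^-,u^+}|f'(u)|$, split as $\hat f=\hat f^C+\hat f^D$ with $\hat f^C=\tfrac12(f(u^+)+f(u^-))$,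 $\hat f^D=-\tfrac12\alpha(u^+-u^-)$; $\hat f_{i+1/2}=\hat f(u_h|^-_{i+1/2},u_h|^+_{i+1/2})$. Numerical entropy flux $\hat F(u^-,u^+)=\tfrac12(F(u^+)+F(u^-))$, $\hat F_{i+1/2}=\hat F(u_h|^-_{i+1/2},u_h|^+_{i+1/2})$. NOES-DG scheme: find $u_h(\cdot,t)\in V_h^k$ such that for all $w\in V_h^k$ and all $i$, $$\int_{K_i}\partial_t u_h\,w\,\mathrm dx=\int_{K_i}f(u_h)\,\partial_x w\,\mathrm dx-\hat f_{i+1/2}w^-_{i+1/2}+\hat f_{i-1/2}w^+_{i-1/2}-\sigma_i\int_{K_i}\nu_i\,\partial_x v_h\,A(u_h)\,\partial_x w\,\mathrm dx,$$ where $\nu_i(x)=1-\big(\tfrac{x-x_i}{h/2}\big)^2$, $v_h\in V_h^k$ is on each cell the degree-$k$ interpolant of $v(u_h)$ at the $k+1$ Gauss–Lobatto points of $K_i$ (so $v_h|^-_{i+1/2}=v(u_h|^-_{i+1/2})$ and $v_h|^+_{i-1/2}=v(u_h|^+_{i-1/2})$), and $\sigma_i=\max\{\sigma_i^{jump},\sigma_i^{entropy}\}$ with $\sigma_i^{jump}=c_f\big(h\|[\![u_h]\!]\|_{\partial K_i}+\sum_{l=1}^k l(l+1)h^{l+1}\|[\![\partial_x^l u_h]\!]\|_{\partial K_i}\big)$, $\|[\![\partial_x^lu_h]\!]\|_{\partial K_i}=|[\![\partial_x^lu_h]\!]_{i-1/2}|+|[\![\partial_x^lu_h]\!]_{i+1/2}|$,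 $c_f=c_0\max_{x\in K_i}|f'(u_h(x))|$ with a constant $c_0>0$; $\sigma_i^{entropy}=\min\{\max\{F_i/E_i,0\},\,C\sigma_i^{jump}\}$ with a constant $C>1$, where $E_i=\int_{K_i}\nu_i\,\partial_xv_h\,A(u_h)\,\partial_xv_h\,\mathrm dx$ and $F_i=\hat F_{i+1/2}-\hat F_{i-1/2}-\hat f^C_{i+1/2}v_h|^-_{i+1/2}+\hat f^C_{i-1/2}v_h|^+_{i-1/2}+\int_{K_i}f(u_h)\partial_xv_h\,\mathrm dx$. The integrals appearing in the scheme and those in $E_i$ and $F_i$ are evaluated in the same way (exactly, or with one and the same quadrature rule). *)

theory Defs
  imports "HOL-Analysis.Analysis" "HOL-Computational_Algebra.Polynomial"
begin

text \<open>Uniform periodic mesh on [a,b] with N cells, 0-based cell index i < N: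
  cell i = [xl i, xr i], right interface of cell i is "i+1/2", its left
  interface is the right interface of cell prv i (indices modulo N).
  A function in V_h^k is represented by its family of cell polynomials
  P :: nat => real poly (P i = restriction to cell i, degree <= k).\<close>

definition mesh_h :: "real \<Rightarrow> real \<Rightarrow> nat \<Rightarrow> real" where
  "mesh_h a b N = (b - a) / real N"

definition xl :: "real \<Rightarrow> real \<Rightarrow> nat \<Rightarrow> nat \<Rightarrow> real" where
  "xl a b N i = a + real i * mesh_h a b N"

definition xr :: "real \<Rightarrow> real \<Rightarrow> nat \<Rightarrow> nat \<Rightarrow> real" where
  "xr a b N i = a + real (Suc i) * mesh_h a b N"

definition xmid :: "real \<Rightarrow> real \<Rightarrow> nat \<Rightarrow> nat \<Rightarrow> real" where
  "xmid a b N i = a + (real i + 1/2) * mesh_h a b N"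

definition nxt :: "nat \<Rightarrow> nat \<Rightarrow> nat" where
  "nxt N i = Suc i mod N"

definition prv :: "nat \<Rightarrow> nat \<Rightarrow> nat" where
  "prv N i = (i + N - 1) mod N"

definition tr_minus :: "real \<Rightarrow> real \<Rightarrow> nat \<Rightarrow> (nat \<Rightarrow> real poly) \<Rightarrow> nat \<Rightarrow> real" where
  "tr_minus a b N P i = poly (P i) (xr a b N i)"

definition tr_plus :: "real \<Rightarrow> real \<Rightarrow> nat \<Rightarrow> (nat \<Rightarrow> real poly) \<Rightarrow> nat \<Rightarrow> real" where
  "tr_plus a b N P i = poly (P (nxt N i)) (xl a b N (nxt N i))"

definition jump :: "real \<Rightarrow> real \<Rightarrow> nat \<Rightarrow> (nat \<Rightarrow> real poly) \<Rightarrow> nat \<Rightarrow> real" where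
  "jump a b N P i = tr_plus a b N P i - tr_minus a b N P i"

definition lf_alpha :: "(real \<Rightarrow> real) \<Rightarrow> real \<Rightarrow> real \<Rightarrow> real" where
  "lf_alpha f' um up = Sup ((\<lambda>u. \<bar>f' u\<bar>) ` {min um up..max um up})"

definition flux_C :: "(real \<Rightarrow> real) \<Rightarrow> real \<Rightarrow> real \<Rightarrow> real" where
  "flux_C f um up = (f up + f um) / 2"

definition flux_D :: "(real \<Rightarrow> real) \<Rightarrow> real \<Rightarrow> real \<Rightarrow> real" where
  "flux_D f' um up = - (lf_alpha f' um up / 2) * (up - um)"

definition lf_flux :: "(real \<Rightarrow> real) \<Rightarrow> (real \<Rightarrow> real) \<Rightarrow> real \<Rightarrow> real \<Rightarrow> real" where
  "lf_flux f f' um up = (f up + f um) / 2 - (lf_alpha f' um up / 2) * (up - um)"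

definition ent_flux :: "(real \<Rightarrow> real) \<Rightarrow> real \<Rightarrow> real \<Rightarrow> real" where
  "ent_flux F um up = (F up + F um) / 2"

definition nu :: "real \<Rightarrow> real \<Rightarrow> nat \<Rightarrow> nat \<Rightarrow> real \<Rightarrow> real" where
  "nu a b N i x = 1 - ((x - xmid a b N i) / (mesh_h a b N / 2)) ^ 2"

definition visc_int :: "real \<Rightarrow> real \<Rightarrow> nat \<Rightarrow> (real \<Rightarrow> real) \<Rightarrow> (nat \<Rightarrow> real poly)
    \<Rightarrow> (nat \<Rightarrow> real poly) \<Rightarrow> nat \<Rightarrow> real poly \<Rightarrow> real" where
  "visc_int a b N A P V i w =
     integral {xl a b N i..xr a b N i}
       (\<lambda>x. nu a b N i x * poly (pderiv (V i)) x * A (poly (P i) x) * poly (pderiv w) x)"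

definition E_cell :: "real \<Rightarrow> real \<Rightarrow> nat \<Rightarrow> (real \<Rightarrow> real) \<Rightarrow> (nat \<Rightarrow> real poly)
    \<Rightarrow> (nat \<Rightarrow> real poly) \<Rightarrow> nat \<Rightarrow> real" where
  "E_cell a b N A P V i = visc_int a b N A P V i (V i)"

definition F_cell :: "real \<Rightarrow> real \<Rightarrow> nat \<Rightarrow> (real \<Rightarrow> real) \<Rightarrow> (real \<Rightarrow> real)
    \<Rightarrow> (nat \<Rightarrow> real poly) \<Rightarrow> (nat \<Rightarrow> real poly) \<Rightarrow> nat \<Rightarrow> real" where
  "F_cell a b N f F P V i =
     ent_flux F (tr_minus a b N P i) (tr_plus a b N P i)
     - ent_flux F (tr_minus a b N P (prv N i)) (tr_plus a b N P (prv N i))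
     - flux_C f (tr_minus a b N P i) (tr_plus a b N P i) * poly (V i) (xr a b N i)
     + flux_C f (tr_minus a b N P (prv N i)) (tr_plus a b N P (prv N i)) * poly (V i) (xl a b N i)
     + integral {xl a b N i..xr a b N i} (\<lambda>x. f (poly (P i) x) * poly (pderiv (V i)) x)"

definition sigma_jump :: "real \<Rightarrow> real \<Rightarrow> nat \<Rightarrow> nat \<Rightarrow> real \<Rightarrow> (real \<Rightarrow> real)
    \<Rightarrow> (nat \<Rightarrow> real poly) \<Rightarrow> nat \<Rightarrow> real" where
  "sigma_jump a b N k c0 f' P i =
     (c0 * Sup ((\<lambda>x. \<bar>f' (poly (P i) x)\<bar>) ` {xl a b N i..xr a b N i})) *
     (mesh_h a b N * (\<bar>jump a b N P (prv N i)\<bar> + \<bar>jump a b N P i\<bar>)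
      + (\<Sum>l = 1..k. real l * real (l + 1) * mesh_h a b N ^ (l + 1) *
          (\<bar>jump a b N (\<lambda>j. (pderiv ^^ l) (P j)) (prv N i)\<bar>
           + \<bar>jump a b N (\<lambda>j. (pderiv ^^ l) (P j)) i\<bar>)))"

definition sigma_entropy :: "real \<Rightarrow> real \<Rightarrow> nat \<Rightarrow> nat \<Rightarrow> real \<Rightarrow> real
    \<Rightarrow> (real \<Rightarrow> real) \<Rightarrow> (real \<Rightarrow> real) \<Rightarrow> (real \<Rightarrow> real) \<Rightarrow> (real \<Rightarrow> real)
    \<Rightarrow> (nat \<Rightarrow> real poly) \<Rightarrow> (nat \<Rightarrow> real poly) \<Rightarrow> nat \<Rightarrow> real" where
  "sigma_entropy a b N k c0 C f f' F A P V i =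
     min (max (F_cell a b N f F P V i / E_cell a b N A P V i) 0)
         (C * sigma_jump a b N k c0 f' P i)"

definition sigma_cell :: "real \<Rightarrow> real \<Rightarrow> nat \<Rightarrow> nat \<Rightarrow> real \<Rightarrow> real
    \<Rightarrow> (real \<Rightarrow> real) \<Rightarrow> (real \<Rightarrow> real) \<Rightarrow> (real \<Rightarrow> real) \<Rightarrow> (real \<Rightarrow> real)
    \<Rightarrow> (nat \<Rightarrow> real poly) \<Rightarrow> (nat \<Rightarrow> real poly) \<Rightarrow> nat \<Rightarrow> real" where
  "sigma_cell a b N k c0 C f f' F A P V i =
     max (sigma_jump a b N k c0 f' P i) (sigma_entropy a b N k c0 C f f' F A P V i)"

definition scheme_rhs :: "real \<Rightarrow> real \<Rightarrow> nat \<Rightarrow> nat \<Rightarrow> real \<Rightarrow> real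
    \<Rightarrow> (real \<Rightarrow> real) \<Rightarrow> (real \<Rightarrow> real) \<Rightarrow> (real \<Rightarrow> real) \<Rightarrow> (real \<Rightarrow> real)
    \<Rightarrow> (nat \<Rightarrow> real poly) \<Rightarrow> (nat \<Rightarrow> real poly) \<Rightarrow> nat \<Rightarrow> real poly \<Rightarrow> real" where
  "scheme_rhs a b N k c0 C f f' F A P V i w =
     integral {xl a b N i..xr a b N i} (\<lambda>x. f (poly (P i) x) * poly (pderiv w) x)
     - lf_flux f f' (tr_minus a b N P i) (tr_plus a b N P i) * poly w (xr a b N i)
     + lf_flux f f' (tr_minus a b N P (prv N i)) (tr_plus a b N P (prv N i)) * poly w (xl a b N i)
     - sigma_cell a b N k c0 C f f' F A P V i * visc_int a b N A P V i w"

text \<open>The k+1 Gauss-Lobatto points on the reference cell [-1,1]: the roots of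
  (1 - xi^2) L_k'(xi), L_k the Legendre polynomial, written via Rodrigues' formula
  (L_k is a nonzero multiple of the k-th derivative of (xi^2-1)^k).\<close>
definition gl_nodes :: "nat \<Rightarrow> real set" where
  "gl_nodes k = {\<xi>. poly ([:1, 0, -1:] * (pderiv ^^ (Suc k)) ([:-1, 0, 1:] ^ k)) \<xi> = 0}"

end

theory Submission
  imports Defs
begin

text \<open>Test the scheme on each cell with \<open>w = v\<^sub>h\<close>. Since the Gauss-Lobatto nodes contain the
  cell endpoints, \<open>v\<^sub>h\<close> takes the values \<open>v(u\<^sub>h\<^sup>\<plusminus>)\<close> there, and the right-hand side splits into
  \<open>F\<^sub>i - \<sigma>\<^sub>i E\<^sub>i\<close>, the Lax-Friedrichs dissipation \<open>-\<alpha>/2 [[u\<^sub>h]] [[v(u\<^sub>h)]] \<le> 0\<close> (\<open>v = U'\<close> is monotone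
  because \<open>U\<close> is convex), and a difference of interface fluxes that telescopes over the periodic
  mesh. The hypothesis makes the entropy viscosity equal to \<open>max (F\<^sub>i/E\<^sub>i) 0\<close>, and \<open>E\<^sub>i \<ge> 0\<close> because \<open>\<nu>\<^sub>i \<ge> 0\<close>
  and \<open>A = 1/U'' \<ge> 0\<close>, so \<open>F\<^sub>i - \<sigma>\<^sub>i E\<^sub>i \<le> 0\<close> on every cell.\<close>

lemma convex_on_deriv_mono:
  fixes U v :: "real \<Rightarrow> real"
  assumes convex: "convex_on UNIV U" and deriv: "\<And>u. (U has_real_derivative v u) (at u)"
  shows "mono v"
proof
  fix x y :: real assume "x \<le> y"
  have "v x * (y - x) \<le> U y - U x"
    by (rule convex_on_imp_above_tangent[OF convex]) (auto simp: deriv)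
  moreover have "v y * (x - y) \<le> U x - U y"
    by (rule convex_on_imp_above_tangent[OF convex]) (auto simp: deriv)
  ultimately have "v x * (y - x) \<le> v y * (y - x)" by (simp add: algebra_simps)
  with \<open>x \<le> y\<close> show "v x \<le> v y"
    by (cases "x = y") auto
qed

lemma convex_on_second_deriv_nonneg:
  fixes U v U2 :: "real \<Rightarrow> real"
  assumes "convex_on UNIV U" and "\<And>u. (U has_real_derivative v u) (at u)"
    and "\<And>u. (v has_real_derivative U2 u) (at u)"
  shows "0 \<le> U2 u"
proof (rule mono_on_imp_deriv_nonneg[where A = UNIV and f = v and x = u])
  show "mono_on UNIV v" using convex_on_deriv_mono[OF assms(1,2)] by (simp add: mono_on_def monoD)
qed (auto simp: assms(3))

lemma lf_alpha_nonneg: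
  assumes "continuous_on UNIV f'"
  shows "0 \<le> lf_alpha f' um up"
proof -
  let ?S = "(\<lambda>u. \<bar>f' u\<bar>) ` {min um up..max um up}"
  have "continuous_on {min um up..max um up} (\<lambda>u. \<bar>f' u\<bar>)"
    by (intro continuous_on_rabs continuous_on_subset[OF assms]) auto
  then have "bdd_above ?S"
    by (intro bounded_imp_bdd_above compact_imp_bounded compact_continuous_image compact_Icc)
  moreover have "\<bar>f' um\<bar> \<in> ?S" by auto
  ultimately have "\<bar>f' um\<bar> \<le> Sup ?S" by (rule cSup_upper[rotated])
  then show ?thesis unfolding lf_alpha_def by linarith
qed

lemma flux_D_dissipative:
  assumes "continuous_on UNIV f'" and "mono v"
  shows "flux_D f' um up * (v up - v um) \<le> 0"
proof -
  have "0 \<le> (up - um) * (v up - v um)"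
    using \<open>mono v\<close> by (cases "um \<le> up") (auto simp: monoD mult_nonpos_nonpos)
  then have "0 \<le> lf_alpha f' um up * ((up - um) * (v up - v um))"
    by (rule mult_nonneg_nonneg[OF lf_alpha_nonneg[OF assms(1)]])
  then show ?thesis unfolding flux_D_def by (simp add: mult.assoc)
qed

lemma nxt_prv: "i < N \<Longrightarrow> nxt N (prv N i) = i"
  unfolding nxt_def prv_def by (simp add: mod_Suc_eq)

lemma prv_nxt: "i < N \<Longrightarrow> prv N (nxt N i) = i"
  unfolding nxt_def prv_def by (cases "Suc i = N") auto

lemma sum_prv_reindex:
  fixes g :: "nat \<Rightarrow> 'a::comm_monoid_add"
  assumes "0 < N"
  shows "(\<Sum>i<N. g (prv N i)) = (\<Sum>i<N. g i)"
proof -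
  have "prv N i < N" "nxt N i < N" for i
    using assms by (simp_all add: prv_def nxt_def)
  then have "bij_betw (prv N) {..<N} {..<N}"
    by (intro bij_betw_byWitness[where f' = "nxt N"]) (auto simp: nxt_prv prv_nxt)
  then show ?thesis by (rule sum.reindex_bij_betw)
qed

lemma xmid_plus_half_mesh: "xmid a b N i + mesh_h a b N / 2 = xr a b N i"
  unfolding xmid_def xr_def by (simp add: algebra_simps)

lemma xmid_minus_half_mesh: "xmid a b N i - mesh_h a b N / 2 = xl a b N i"
  unfolding xmid_def xl_def by (simp add: algebra_simps)

lemma gl_nodes_endpoints: "1 \<in> gl_nodes k" "-1 \<in> gl_nodes k"
  unfolding gl_nodes_def by simp_all

lemma nu_nonneg:
  assumes "a < b" and "0 < N" and "x \<in> {xl a b N i..xr a b N i}"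
  shows "0 \<le> nu a b N i x"
proof -
  define h where "h = mesh_h a b N"
  define t where "t = (x - xmid a b N i) / (h / 2)"
  have "0 < h" using assms(1,2) unfolding h_def mesh_h_def by simp
  moreover have "x - xmid a b N i \<le> h / 2" "- (h / 2) \<le> x - xmid a b N i"
    using assms(3) unfolding xl_def xr_def xmid_def h_def by (auto simp: algebra_simps)
  ultimately have "\<bar>t\<bar> \<le> 1" unfolding t_def by (auto simp: field_simps)
  then have "t\<^sup>2 \<le> 1" by (simp add: abs_square_le_1)
  then show ?thesis unfolding nu_def t_def h_def by simp
qed

lemma E_cell_nonneg:
  assumes "a < b" and "0 < N" and A: "\<And>u. 0 \<le> A u"
  shows "0 \<le> E_cell a b N A P V i"
proof -
  let ?K = "{xl a b N i..xr a b N i}"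
  let ?g = "\<lambda>x. nu a b N i x * poly (pderiv (V i)) x * A (poly (P i) x) * poly (pderiv (V i)) x"
  have g: "0 \<le> ?g x" if "x \<in> ?K" for x
  proof -
    have "?g x = nu a b N i x * A (poly (P i) x) * (poly (pderiv (V i)) x)\<^sup>2"
      by (simp only: power2_eq_square ac_simps)
    moreover have "0 \<le> nu a b N i x * A (poly (P i) x) * (poly (pderiv (V i)) x)\<^sup>2"
      by (intro mult_nonneg_nonneg nu_nonneg[OF assms(1,2) that] A zero_le_power2)
    ultimately show ?thesis by (simp only:)
  qed
  have "0 \<le> integral ?K ?g"
  proof (cases "?g integrable_on ?K")
    case True
    then show ?thesis by (rule Henstock_Kurzweil_Integration.integral_nonneg) (rule g)
  qed (simp add: not_integrable_integral)
  then show ?thesis unfolding E_cell_def visc_int_def .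
qed

lemma F_cell_le_sigma_cell_E_cell:
  assumes "0 < E_cell a b N A P V i"
    and "max (F_cell a b N f F P V i / E_cell a b N A P V i) 0 < C * sigma_jump a b N k c0 f' P i"
  shows "F_cell a b N f F P V i \<le> sigma_cell a b N k c0 C f f' F A P V i * E_cell a b N A P V i"
proof -
  have "F_cell a b N f F P V i / E_cell a b N A P V i \<le> sigma_cell a b N k c0 C f f' F A P V i"
    using assms(2) unfolding sigma_cell_def sigma_entropy_def by simp
  with assms(1) show ?thesis by (simp add: pos_divide_le_eq)
qed

definition interface_entropy_flux :: "real \<Rightarrow> real \<Rightarrow> nat \<Rightarrow> (real \<Rightarrow> real) \<Rightarrow> (real \<Rightarrow> real)
    \<Rightarrow> (real \<Rightarrow> real) \<Rightarrow> (nat \<Rightarrow> real poly) \<Rightarrow> nat \<Rightarrow> real" where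
  "interface_entropy_flux a b N f' F v P j =
     ent_flux F (tr_minus a b N P j) (tr_plus a b N P j)
     + flux_D f' (tr_minus a b N P j) (tr_plus a b N P j) * v (tr_plus a b N P j)"

lemma scheme_rhs_entropy_split:
  assumes "poly (V i) (xr a b N i) = v (tr_minus a b N P i)"
    and "poly (V i) (xl a b N i) = v (tr_plus a b N P (prv N i))"
  shows "scheme_rhs a b N k c0 C f f' F A P V i (V i) =
      (F_cell a b N f F P V i - sigma_cell a b N k c0 C f f' F A P V i * E_cell a b N A P V i)
      + flux_D f' (tr_minus a b N P i) (tr_plus a b N P i)
          * (v (tr_plus a b N P i) - v (tr_minus a b N P i))
      - interface_entropy_flux a b N f' F v P i + interface_entropy_flux a b N f' F v P (prv N i)"
  unfolding scheme_rhs_def F_cell_def E_cell_def interface_entropy_flux_def lf_flux_def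
    flux_C_def flux_D_def assms
  by (simp add: field_simps)

lemma entropy_production_nonpos:
  fixes D :: "nat \<Rightarrow> real \<Rightarrow> real"
  assumes "a < b" and N: "0 < N" and f': "continuous_on UNIV f'" and v: "mono v"
    and A: "\<And>u. 0 \<le> A u"
    and trace_right: "\<And>i. i < N \<Longrightarrow> poly (V i) (xr a b N i) = v (tr_minus a b N P i)"
    and trace_left: "\<And>i. i < N \<Longrightarrow> poly (V i) (xl a b N i) = v (tr_plus a b N P (prv N i))"
    and scheme: "\<And>i. i < N \<Longrightarrow> integral {xl a b N i..xr a b N i} (\<lambda>x. D i x * poly (V i) x)
                      = scheme_rhs a b N k c0 C f f' F A P V i (V i)"
    and hyp: "\<And>i. i < N \<Longrightarrow> E_cell a b N A P V i \<noteq> 0 \<and>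
        max (F_cell a b N f F P V i / E_cell a b N A P V i) 0 < C * sigma_jump a b N k c0 f' P i"
  shows "(\<Sum>i<N. integral {xl a b N i..xr a b N i} (\<lambda>x. D i x * poly (V i) x)) \<le> 0"
proof -
  define Q where "Q = interface_entropy_flux a b N f' F v P"
  define cell where "cell i =
      (F_cell a b N f F P V i - sigma_cell a b N k c0 C f f' F A P V i * E_cell a b N A P V i)
      + flux_D f' (tr_minus a b N P i) (tr_plus a b N P i)
          * (v (tr_plus a b N P i) - v (tr_minus a b N P i))" for i
  have "(\<Sum>i<N. integral {xl a b N i..xr a b N i} (\<lambda>x. D i x * poly (V i) x))
      = (\<Sum>i<N. cell i) - (\<Sum>i<N. Q i) + (\<Sum>i<N. Q (prv N i))"
    by (simp add: scheme scheme_rhs_entropy_split trace_left trace_right cell_def Q_def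
        sum.distrib sum_subtractf)
  also have "\<dots> = (\<Sum>i<N. cell i)" by (simp add: sum_prv_reindex[OF N])
  also have "\<dots> \<le> 0"
  proof (rule sum_nonpos)
    fix i assume "i \<in> {..<N}"
    then have i: "i < N" by simp
    have "0 < E_cell a b N A P V i"
      using hyp[OF i] E_cell_nonneg[OF \<open>a < b\<close> N A] by (simp add: order.not_eq_order_implies_strict)
    with hyp[OF i] have "F_cell a b N f F P V i
        \<le> sigma_cell a b N k c0 C f f' F A P V i * E_cell a b N A P V i"
      by (blast intro: F_cell_le_sigma_cell_E_cell)
    then show "cell i \<le> 0"
      using flux_D_dissipative[OF f' v, of "tr_minus a b N P i" "tr_plus a b N P i"]
      unfolding cell_def by linarith
  qed
  finally show ?thesis .
qed

theorem theorem2p2: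
  fixes a b T c0 C :: real and N k :: nat
    and f f' U v U2 A F :: "real \<Rightarrow> real"
    and Uh Vh :: "real \<Rightarrow> nat \<Rightarrow> real poly"
    and Dt :: "real \<Rightarrow> nat \<Rightarrow> real \<Rightarrow> real"
  assumes ab: "a < b" and N: "0 < N" and k: "1 \<le> k"
    and c0: "0 < c0" and C: "1 < C" and T: "0 < T"
    and flux: "\<forall>u. (f has_real_derivative f' u) (at u)" "continuous_on UNIV f'"
    and entropy: "convex_on UNIV U"
      "\<forall>u. (U has_real_derivative v u) (at u)"
      "\<forall>u. (v has_real_derivative U2 u) (at u)"
      "\<forall>u. A u = inverse (U2 u)"
      "\<forall>u. (F has_real_derivative v u * f' u) (at u)"
    and space: "\<forall>s\<in>{0<..<T}. \<forall>i<N. degree (Uh s i) \<le> k"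
    and time_deriv: "\<forall>s\<in>{0<..<T}. \<forall>i<N. \<forall>x\<in>{xl a b N i..xr a b N i}.
        ((\<lambda>\<tau>. poly (Uh \<tau> i) x) has_real_derivative Dt s i x) (at s)"
    and interp: "\<forall>s\<in>{0<..<T}. \<forall>i<N. degree (Vh s i) \<le> k \<and>
        (\<forall>\<xi>\<in>gl_nodes k.
           poly (Vh s i) (xmid a b N i + mesh_h a b N / 2 * \<xi>)
           = v (poly (Uh s i) (xmid a b N i + mesh_h a b N / 2 * \<xi>)))"
    and scheme: "\<forall>s\<in>{0<..<T}. \<forall>W. (\<forall>j<N. degree (W j) \<le> k) \<longrightarrow>
        (\<forall>i<N. integral {xl a b N i..xr a b N i} (\<lambda>x. Dt s i x * poly (W i) x)
               = scheme_rhs a b N k c0 C f f' F A (Uh s) (Vh s) i (W i))"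
    and hyp: "\<forall>s\<in>{0<..<T}. \<forall>i<N. E_cell a b N A (Uh s) (Vh s) i \<noteq> 0 \<and>
        max (F_cell a b N f F (Uh s) (Vh s) i / E_cell a b N A (Uh s) (Vh s) i) 0
          < C * sigma_jump a b N k c0 f' (Uh s) i"
  shows "\<forall>s\<in>{0<..<T}.
     (\<Sum>i<N. integral {xl a b N i..xr a b N i} (\<lambda>x. Dt s i x * poly (Vh s i) x)) \<le> 0"
proof
  fix s assume s: "s \<in> {0<..<T}"
  have v: "mono v" using convex_on_deriv_mono entropy(1,2) by blast
  have A: "0 \<le> A u" for u
    using convex_on_second_deriv_nonneg[OF entropy(1), of v U2 u] entropy(2-4) by simp
  have interp_at: "poly (Vh s i) (xmid a b N i + mesh_h a b N / 2 * \<xi>)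
      = v (poly (Uh s i) (xmid a b N i + mesh_h a b N / 2 * \<xi>))"
    if "i < N" "\<xi> \<in> gl_nodes k" for i \<xi>
    using interp s that by blast
  show "(\<Sum>i<N. integral {xl a b N i..xr a b N i} (\<lambda>x. Dt s i x * poly (Vh s i) x)) \<le> 0"
  proof (rule entropy_production_nonpos[OF ab N flux(2) v A])
    fix i assume i: "i < N"
    show "poly (Vh s i) (xr a b N i) = v (tr_minus a b N (Uh s) i)"
      using interp_at[OF i gl_nodes_endpoints(1)] by (simp add: xmid_plus_half_mesh tr_minus_def)
    show "poly (Vh s i) (xl a b N i) = v (tr_plus a b N (Uh s) (prv N i))"
      using interp_at[OF i gl_nodes_endpoints(2)]
      by (simp add: xmid_minus_half_mesh tr_plus_def nxt_prv[OF i])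
    show "integral {xl a b N i..xr a b N i} (\<lambda>x. Dt s i x * poly (Vh s i) x)
        = scheme_rhs a b N k c0 C f f' F A (Uh s) (Vh s) i (Vh s i)"
      using scheme s interp i by blast
    show "E_cell a b N A (Uh s) (Vh s) i \<noteq> 0 \<and>
        max (F_cell a b N f F (Uh s) (Vh s) i / E_cell a b N A (Uh s) (Vh s) i) 0
          < C * sigma_jump a b N k c0 f' (Uh s) i"
      using hyp s i by blast
  qed
qed

end
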